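(* For every finite simple graph $G$, $\chi_s(G)\le \tau(G)$.
   Context: $\tau(G)$ denotes the number of vertices in a longest path of $G$. A star colouring of $G$ is a proper vertex colouring in which every path on four vertices uses at least three distinct colours; the star chromatic number $\chi_s(G)$ is the least number of colours in a star colouring of $G$. *)

theory Defs
  imports Main
begin

definition simple_graph :: "'a set \<Rightarrow> ('a \<Rightarrow> 'a \<Rightarrow> bool) \<Rightarrow> bool" where
  "simple_graph V E \<longleftrightarrow> finite V \<and> (\<forall>u v. E u v \<longrightarrow> u \<in> V \<and> v \<in> V)
     \<and> (\<forall>u v. E u v \<longrightarrow> E v u) \<and> (\<forall>u. \<not> E u u)"

definition is_path :: "'a set \<Rightarrow> ('a \<Rightarrow> 'a \<Rightarrow> bool) \<Rightarrow> 'a list \<Rightarrow> bool" where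
  "is_path V E xs \<longleftrightarrow> xs \<noteq> [] \<and> distinct xs \<and> set xs \<subseteq> V
     \<and> (\<forall>i. Suc i < length xs \<longrightarrow> E (xs ! i) (xs ! Suc i))"

text \<open>tau(G): number of vertices of a longest path (0 for the empty graph).\<close>

definition longest_path :: "'a set \<Rightarrow> ('a \<Rightarrow> 'a \<Rightarrow> bool) \<Rightarrow> nat" where
  "longest_path V E = Max ({0} \<union> length ` {xs. is_path V E xs})"

definition star_colouring :: "'a set \<Rightarrow> ('a \<Rightarrow> 'a \<Rightarrow> bool) \<Rightarrow> ('a \<Rightarrow> nat) \<Rightarrow> nat \<Rightarrow> bool" where
  "star_colouring V E c k \<longleftrightarrow> (\<forall>v\<in>V. c v < k)
     \<and> (\<forall>u v. E u v \<longrightarrow> c u \<noteq> c v)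
     \<and> (\<forall>xs. is_path V E xs \<and> length xs = 4 \<longrightarrow> card (c ` set xs) \<ge> 3)"

definition star_chromatic :: "'a set \<Rightarrow> ('a \<Rightarrow> 'a \<Rightarrow> bool) \<Rightarrow> nat" where
  "star_chromatic V E = (LEAST k. \<exists>c. star_colouring V E c k)"

end

theory Submission
  imports Defs
begin

text \<open>Depth-first search yields a rooted spanning forest of \<open>G\<close> in which every edge joins
an ancestor to a descendant. Colour each vertex by its depth. The tree path from a root to a
vertex of depth \<open>d\<close> is a path on \<open>d + 1\<close> vertices, so at most \<open>\<tau>(G)\<close> colours are used. If
\<open>a b x\<close> is a path with \<open>a \<noteq> x\<close> of equal depth, then \<open>a\<close> and \<open>x\<close> are incomparable, so \<open>b\<close> must be
a common ancestor and lies strictly higher. A path \<open>x\<^sub>1 x\<^sub>2 x\<^sub>3 x\<^sub>4\<close> coloured \<open>a b a b\<close> would then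
give \<open>depth x\<^sub>2 < depth x\<^sub>1 = depth x\<^sub>3 < depth x\<^sub>2\<close>.\<close>

definition connected_in :: "('a \<Rightarrow> 'a \<Rightarrow> bool) \<Rightarrow> 'a set \<Rightarrow> 'a \<Rightarrow> 'a \<Rightarrow> bool" where
  "connected_in E U = (\<lambda>a b. E a b \<and> a \<in> U \<and> b \<in> U)\<^sup>*\<^sup>*"

lemma connected_in_closed:
  assumes "connected_in E U x y" "x \<in> S"
    and closed: "\<And>u v. u \<in> S \<Longrightarrow> v \<in> U \<Longrightarrow> E u v \<Longrightarrow> v \<in> S"
  shows "connected_in E S x y"
proof -
  have "connected_in E S x y \<and> y \<in> S"
    using assms(1) unfolding connected_in_def
  proof (induction rule: rtranclp_induct)
    case base
    then show ?case using \<open>x \<in> S\<close> by simp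
  next
    case (step y z)
    then have "z \<in> S" using closed by blast
    with step show ?case by (auto intro: rtranclp.rtrancl_into_rtrancl)
  qed
  then show ?thesis ..
qed

lemma connected_in_mem: "connected_in E U x y \<Longrightarrow> x \<in> U \<Longrightarrow> y \<in> U"
  unfolding connected_in_def by (induction rule: rtranclp_induct) auto

lemma is_path_mono: "is_path U E xs \<Longrightarrow> U \<subseteq> U' \<Longrightarrow> is_path U' E xs"
  unfolding is_path_def by auto

lemma is_path_Cons:
  assumes "is_path U E xs" "r \<notin> set xs" "r \<in> U" "E r (hd xs)"
  shows "is_path U E (r # xs)"
  using assms unfolding is_path_def
  by (auto simp: nth_Cons hd_conv_nth split: nat.splits)

lemma length_le_longest_path:
  assumes "simple_graph V E" "is_path V E xs"
  shows "length xs \<le> longest_path V E"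
proof -
  let ?L = "{0} \<union> length ` {xs. is_path V E xs}"
  have "finite V" using assms(1) by (simp add: simple_graph_def)
  have "length ys \<le> card V" if "is_path V E ys" for ys
    using that card_mono[OF \<open>finite V\<close>, of "set ys"] distinct_card[of ys] by (auto simp: is_path_def)
  then have "?L \<subseteq> {0..card V}" by auto
  then have "finite ?L" by (rule finite_subset) simp
  then show ?thesis using assms(2) by (auto simp: longest_path_def)
qed

text \<open>\<open>anc u v\<close> reads ``\<open>u\<close> is a proper ancestor of \<open>v\<close>'' in a rooted forest on \<open>W\<close>, and \<open>d\<close> is a
labelling that strictly increases from ancestors to descendants. In \<open>depth_paths\<close>, the paths play
the role of the root-to-vertex tree paths and \<open>N\<close> is the set of admissible roots.\<close>

definition normal_tree_order ::
    "('a \<Rightarrow> 'a \<Rightarrow> bool) \<Rightarrow> 'a set \<Rightarrow> ('a \<Rightarrow> nat) \<Rightarrow> ('a \<Rightarrow> 'a \<Rightarrow> bool) \<Rightarrow> bool" where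
  "normal_tree_order E W d anc \<longleftrightarrow>
     (\<forall>u v. E u v \<and> u \<in> W \<and> v \<in> W \<longrightarrow> anc u v \<or> anc v u)
   \<and> (\<forall>u v. anc u v \<longrightarrow> u \<in> W \<and> v \<in> W \<and> d u < d v)
   \<and> (\<forall>u v w. anc u w \<and> anc v w \<longrightarrow> u = v \<or> anc u v \<or> anc v u)
   \<and> (\<forall>u v w. anc u v \<and> anc v w \<longrightarrow> anc u w)"

definition depth_paths :: "('a \<Rightarrow> 'a \<Rightarrow> bool) \<Rightarrow> 'a set \<Rightarrow> ('a \<Rightarrow> nat) \<Rightarrow> 'a set \<Rightarrow> bool" where
  "depth_paths E W d N \<longleftrightarrow>
     (\<forall>v\<in>W. \<exists>xs. is_path W E xs \<and> hd xs \<in> N \<and> last xs = v \<and> length xs = Suc (d v))"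

lemma normal_tree_order_middle_lower:
  assumes T: "normal_tree_order E W d anc" and sym: "\<And>u v. E u v \<Longrightarrow> E v u"
    and "E a b" "E b x" "a \<noteq> x" "d a = d x" "a \<in> W" "b \<in> W" "x \<in> W"
  shows "d b < d a"
proof -
  have comparable: "anc a b \<or> anc b a" "anc x b \<or> anc b x"
    using T assms(3-) sym unfolding normal_tree_order_def by blast+
  have mono: "\<And>u v. anc u v \<Longrightarrow> d u < d v"
    and tree: "\<And>u v w. anc u w \<Longrightarrow> anc v w \<Longrightarrow> u = v \<or> anc u v \<or> anc v u"
    and trans: "\<And>u v w. anc u v \<Longrightarrow> anc v w \<Longrightarrow> anc u w"
    using T unfolding normal_tree_order_def by blast+
  have "\<not> anc a x" "\<not> anc x a" using mono \<open>d a = d x\<close> by fastforce+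
  then have "\<not> (anc a b \<and> anc x b)" "\<not> (anc a b \<and> anc b x)" "\<not> (anc x b \<and> anc b a)"
    using tree trans \<open>a \<noteq> x\<close> by blast+
  then have "anc b a" using comparable by blast
  then show ?thesis using mono by blast
qed

lemma three_le_card_colours_path4:
  assumes "c x\<^sub>1 \<noteq> c x\<^sub>2" "c x\<^sub>2 \<noteq> c x\<^sub>3" "c x\<^sub>3 \<noteq> c x\<^sub>4" "c x\<^sub>1 \<noteq> c x\<^sub>3 \<or> c x\<^sub>2 \<noteq> c x\<^sub>4"
  shows "3 \<le> card (c ` set [x\<^sub>1, x\<^sub>2, x\<^sub>3, x\<^sub>4])"
  using assms by (auto simp: card_insert_if)

lemma star_colouring_by_depth:
  assumes G: "simple_graph V E" and T: "normal_tree_order E V d anc"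
    and bound: "\<forall>v\<in>V. d v < k"
  shows "star_colouring V E d k"
  unfolding star_colouring_def
proof (intro conjI allI impI)
  have sym: "\<And>u v. E u v \<Longrightarrow> E v u" and in_V: "\<And>u v. E u v \<Longrightarrow> u \<in> V \<and> v \<in> V"
    using G unfolding simple_graph_def by auto
  have proper: "d u \<noteq> d v" if "E u v" for u v
    using T in_V[OF that] that unfolding normal_tree_order_def by (metis less_irrefl)
  then show "\<And>u v. E u v \<Longrightarrow> d u \<noteq> d v" .
  show "\<forall>v\<in>V. d v < k" by (fact bound)
  fix xs assume xs: "is_path V E xs \<and> length xs = 4"
  then obtain x\<^sub>1 x\<^sub>2 x\<^sub>3 x\<^sub>4 where xs_eq: "xs = [x\<^sub>1, x\<^sub>2, x\<^sub>3, x\<^sub>4]"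
    by (auto simp: numeral_eq_Suc length_Suc_conv)
  have e: "E x\<^sub>1 x\<^sub>2" "E x\<^sub>2 x\<^sub>3" "E x\<^sub>3 x\<^sub>4"
    using xs unfolding xs_eq is_path_def by (auto dest: spec[of _ 0] spec[of _ 1] spec[of _ 2])
  have "x\<^sub>1 \<noteq> x\<^sub>3" "x\<^sub>2 \<noteq> x\<^sub>4" using xs unfolding xs_eq is_path_def by auto
  then have "d x\<^sub>1 \<noteq> d x\<^sub>3 \<or> d x\<^sub>2 \<noteq> d x\<^sub>4"
    using normal_tree_order_middle_lower[OF T sym e(1,2)] normal_tree_order_middle_lower[OF T sym e(2,3)]
      e in_V by fastforce
  then show "3 \<le> card (d ` set xs)"
    unfolding xs_eq using e proper by (intro three_le_card_colours_path4) auto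
qed

text \<open>A new root \<open>r\<close> is placed above the forest on \<open>A\<close>, whose roots are neighbours
of \<open>r\<close>, next to the forest on \<open>B\<close>.\<close>

definition graft_depth :: "'a \<Rightarrow> 'a set \<Rightarrow> ('a \<Rightarrow> nat) \<Rightarrow> ('a \<Rightarrow> nat) \<Rightarrow> 'a \<Rightarrow> nat" where
  "graft_depth r A dA dB v = (if v = r then 0 else if v \<in> A then Suc (dA v) else dB v)"

definition graft_anc ::
    "'a \<Rightarrow> 'a set \<Rightarrow> ('a \<Rightarrow> 'a \<Rightarrow> bool) \<Rightarrow> ('a \<Rightarrow> 'a \<Rightarrow> bool) \<Rightarrow> 'a \<Rightarrow> 'a \<Rightarrow> bool" where
  "graft_anc r A ancA ancB u v \<longleftrightarrow> (u = r \<and> v \<in> A) \<or> ancA u v \<or> ancB u v"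

lemma normal_tree_order_graft:
  assumes TA: "normal_tree_order E A dA ancA" and TB: "normal_tree_order E B dB ancB"
    and "r \<notin> A" "r \<notin> B" "A \<inter> B = {}"
    and edges: "\<And>u v. E u v \<Longrightarrow> u \<in> insert r (A \<union> B) \<Longrightarrow> v \<in> insert r (A \<union> B) \<Longrightarrow>
      (u = r \<and> v \<in> A) \<or> (v = r \<and> u \<in> A) \<or> (u \<in> A \<and> v \<in> A) \<or> (u \<in> B \<and> v \<in> B)"
  shows "normal_tree_order E (insert r (A \<union> B)) (graft_depth r A dA dB) (graft_anc r A ancA ancB)"
proof -
  let ?d = "graft_depth r A dA dB" and ?anc = "graft_anc r A ancA ancB"
  have A_edge: "\<And>u v. E u v \<Longrightarrow> u \<in> A \<Longrightarrow> v \<in> A \<Longrightarrow> ancA u v \<or> ancA v u"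
    and A_mono: "\<And>u v. ancA u v \<Longrightarrow> u \<in> A \<and> v \<in> A \<and> dA u < dA v"
    and A_tree: "\<And>u v w. ancA u w \<Longrightarrow> ancA v w \<Longrightarrow> u = v \<or> ancA u v \<or> ancA v u"
    and A_trans: "\<And>u v w. ancA u v \<Longrightarrow> ancA v w \<Longrightarrow> ancA u w"
    using TA unfolding normal_tree_order_def by blast+
  have B_edge: "\<And>u v. E u v \<Longrightarrow> u \<in> B \<Longrightarrow> v \<in> B \<Longrightarrow> ancB u v \<or> ancB v u"
    and B_mono: "\<And>u v. ancB u v \<Longrightarrow> u \<in> B \<and> v \<in> B \<and> dB u < dB v"
    and B_tree: "\<And>u v w. ancB u w \<Longrightarrow> ancB v w \<Longrightarrow> u = v \<or> ancB u v \<or> ancB v u"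
    and B_trans: "\<And>u v w. ancB u v \<Longrightarrow> ancB v w \<Longrightarrow> ancB u w"
    using TB unfolding normal_tree_order_def by blast+
  have "?anc u v \<or> ?anc v u" if "E u v" "u \<in> insert r (A \<union> B)" "v \<in> insert r (A \<union> B)" for u v
    using edges[OF that] A_edge[OF that(1)] B_edge[OF that(1)] unfolding graft_anc_def by blast
  moreover have "u \<in> insert r (A \<union> B) \<and> v \<in> insert r (A \<union> B) \<and> ?d u < ?d v" if "?anc u v" for u v
    using that A_mono[of u v] B_mono[of u v] \<open>r \<notin> A\<close> \<open>r \<notin> B\<close> \<open>A \<inter> B = {}\<close>
    unfolding graft_anc_def graft_depth_def by auto
  moreover have "u = v \<or> ?anc u v \<or> ?anc v u" if "?anc u w" "?anc v w" for u v w
  proof (cases "w \<in> A")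
    case True
    then have "u = r \<or> ancA u w" "v = r \<or> ancA v w"
      using that B_mono[of u w] B_mono[of v w] \<open>A \<inter> B = {}\<close> unfolding graft_anc_def by auto
    then show ?thesis using A_tree[of u w v] A_mono[of u w] A_mono[of v w] True
      unfolding graft_anc_def by auto
  next
    case False
    then have "ancB u w" "ancB v w"
      using that A_mono[of u w] A_mono[of v w] unfolding graft_anc_def by auto
    then show ?thesis using B_tree[of u w v] unfolding graft_anc_def by auto
  qed
  moreover have "?anc u w" if uv: "?anc u v" and vw: "?anc v w" for u v w
  proof (cases "w \<in> A")
    case True
    have "v \<noteq> r" using uv A_mono[of u v] B_mono[of u v] \<open>r \<notin> A\<close> \<open>r \<notin> B\<close>
      unfolding graft_anc_def by auto
    then have "ancA v w" using vw True B_mono[of v w] \<open>A \<inter> B = {}\<close> unfolding graft_anc_def by auto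
    then show ?thesis
      using uv True A_trans[of u v w] A_mono[of v w] B_mono[of u v] \<open>A \<inter> B = {}\<close>
      unfolding graft_anc_def by auto
  next
    case False
    then have "ancB v w" using vw A_mono[of v w] unfolding graft_anc_def by auto
    then show ?thesis
      using uv B_trans[of u v w] A_mono[of u v] B_mono[of v w] \<open>A \<inter> B = {}\<close>
      unfolding graft_anc_def by auto
  qed
  ultimately show ?thesis unfolding normal_tree_order_def by blast
qed

lemma depth_paths_graft:
  assumes PA: "depth_paths E A dA {m. E r m}" and PB: "depth_paths E B dB N"
    and "r \<in> N" "r \<notin> A" "r \<notin> B" "A \<inter> B = {}"
  shows "depth_paths E (insert r (A \<union> B)) (graft_depth r A dA dB) N"
  unfolding depth_paths_def
proof
  let ?W = "insert r (A \<union> B)"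
  fix v assume "v \<in> ?W"
  then consider "v = r" | "v \<in> A" | "v \<in> B" by blast
  then show "\<exists>xs. is_path ?W E xs \<and> hd xs \<in> N \<and> last xs = v \<and> length xs = Suc (graft_depth r A dA dB v)"
  proof cases
    case 1
    then show ?thesis using \<open>r \<in> N\<close> by (intro exI[of _ "[r]"]) (auto simp: is_path_def graft_depth_def)
  next
    case 2
    then obtain xs where xs: "is_path A E xs" "E r (hd xs)" "last xs = v" "length xs = Suc (dA v)"
      using PA unfolding depth_paths_def by blast
    have "is_path ?W E xs" using is_path_mono[OF xs(1), of ?W] by blast
    moreover have "r \<notin> set xs" using xs(1) \<open>r \<notin> A\<close> unfolding is_path_def by blast
    ultimately have "is_path ?W E (r # xs)" by (rule is_path_Cons) (simp_all add: xs(2))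
    moreover have "xs \<noteq> []" using xs(1) unfolding is_path_def by blast
    moreover have "v \<noteq> r" using 2 \<open>r \<notin> A\<close> by blast
    ultimately show ?thesis using xs 2 \<open>r \<in> N\<close>
      by (intro exI[of _ "r # xs"]) (simp add: graft_depth_def)
  next
    case 3
    then obtain xs where "is_path B E xs" "hd xs \<in> N" "last xs = v" "length xs = Suc (dB v)"
      using PB unfolding depth_paths_def by blast
    moreover have "is_path ?W E xs" using is_path_mono[OF \<open>is_path B E xs\<close>, of ?W] by blast
    ultimately show ?thesis using 3 \<open>r \<notin> B\<close> \<open>A \<inter> B = {}\<close>
      by (intro exI[of _ xs]) (auto simp: graft_depth_def)
  qed
qed

lemma split_off_root:
  assumes sym: "\<And>u v. E u v \<Longrightarrow> E v u" and irrefl: "\<And>u. \<not> E u u" and "r \<in> W"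
  obtains A B where "W = insert r (A \<union> B)" "r \<notin> A" "r \<notin> B" "A \<inter> B = {}"
    "\<And>u v. E u v \<Longrightarrow> u \<in> W \<Longrightarrow> v \<in> W \<Longrightarrow>
      (u = r \<and> v \<in> A) \<or> (v = r \<and> u \<in> A) \<or> (u \<in> A \<and> v \<in> A) \<or> (u \<in> B \<and> v \<in> B)"
    "\<forall>v\<in>A. \<exists>n\<in>{m. E r m}. connected_in E A v n"
proof -
  define A where "A = {x \<in> W - {r}. \<exists>m. E r m \<and> connected_in E (W - {r}) x m}"
  define B where "B = W - {r} - A"
  have partition: "W = insert r (A \<union> B)" "r \<notin> A" "r \<notin> B" "A \<inter> B = {}"
    using \<open>r \<in> W\<close> unfolding A_def B_def by auto
  have A_closed: "v \<in> A" if "u \<in> A" "v \<in> W - {r}" "E u v" for u v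
  proof -
    obtain m where "E r m" "connected_in E (W - {r}) u m" using \<open>u \<in> A\<close> unfolding A_def by blast
    then have "connected_in E (W - {r}) v m"
      using that sym unfolding A_def connected_in_def by (auto intro: converse_rtranclp_into_rtranclp)
    then show ?thesis using that \<open>E r m\<close> unfolding A_def by blast
  qed
  have neighbour_in_A: "x \<in> A" if "E r x" "x \<in> W" for x
    using that irrefl[of r] unfolding A_def connected_in_def by auto
  have edges: "(u = r \<and> v \<in> A) \<or> (v = r \<and> u \<in> A) \<or> (u \<in> A \<and> v \<in> A) \<or> (u \<in> B \<and> v \<in> B)"
    if "E u v" "u \<in> W" "v \<in> W" for u v
    using that neighbour_in_A[of v] neighbour_in_A[of u] sym[OF \<open>E u v\<close>]
      A_closed[of u v] A_closed[of v u] unfolding B_def by blast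
  have "\<forall>v\<in>A. \<exists>n\<in>{m. E r m}. connected_in E A v n"
  proof
    fix x assume "x \<in> A"
    then obtain m where "E r m" "connected_in E (W - {r}) x m" unfolding A_def by blast
    moreover have "connected_in E A x m"
      using connected_in_closed[OF \<open>connected_in E (W - {r}) x m\<close> \<open>x \<in> A\<close>] A_closed by blast
    ultimately show "\<exists>n\<in>{m. E r m}. connected_in E A x n" by blast
  qed
  with partition edges show thesis by (rule that)
qed

lemma normal_tree_order_exists:
  assumes sym: "\<And>u v. E u v \<Longrightarrow> E v u" and irrefl: "\<And>u. \<not> E u u"
  shows "finite W \<Longrightarrow> \<forall>v\<in>W. \<exists>n\<in>N. connected_in E W v n \<Longrightarrow>
    \<exists>d anc. normal_tree_order E W d anc \<and> depth_paths E W d N"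
proof (induction "card W" arbitrary: W N rule: less_induct)
  case less
  show ?case
  proof (cases "W = {}")
    case True
    then show ?thesis
      by (intro exI[of _ "\<lambda>_. 0"] exI[of _ "\<lambda>_ _. False"])
        (simp add: normal_tree_order_def depth_paths_def)
  next
    case False
    then obtain w r where "w \<in> W" "r \<in> N" "connected_in E W w r" using less.prems(2) by blast
    then have "r \<in> W" using connected_in_mem by metis
    then obtain A B where W: "W = insert r (A \<union> B)" and "r \<notin> A" "r \<notin> B" "A \<inter> B = {}"
      and edges: "\<And>u v. E u v \<Longrightarrow> u \<in> W \<Longrightarrow> v \<in> W \<Longrightarrow>
        (u = r \<and> v \<in> A) \<or> (v = r \<and> u \<in> A) \<or> (u \<in> A \<and> v \<in> A) \<or> (u \<in> B \<and> v \<in> B)"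
      and A_connected: "\<forall>v\<in>A. \<exists>n\<in>{m. E r m}. connected_in E A v n"
      using split_off_root[where E = E, OF sym irrefl] by blast
    have B_connected: "\<forall>v\<in>B. \<exists>n\<in>N. connected_in E B v n"
    proof
      fix x assume "x \<in> B"
      then obtain n where "n \<in> N" "connected_in E W x n" using less.prems(2) W by blast
      moreover have "connected_in E B x n"
        using connected_in_closed[OF \<open>connected_in E W x n\<close> \<open>x \<in> B\<close>] edges \<open>A \<inter> B = {}\<close>
          \<open>r \<notin> B\<close> W by blast
      ultimately show "\<exists>n\<in>N. connected_in E B x n" by blast
    qed
    have "A \<subset> W" "B \<subset> W" using \<open>r \<notin> A\<close> \<open>r \<notin> B\<close> unfolding W by auto
    then have "card A < card W" "card B < card W" "finite A" "finite B"
      using less.prems(1) by (meson psubset_card_mono psubset_imp_subset finite_subset)+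
    then obtain dA ancA dB ancB where
      A_order: "normal_tree_order E A dA ancA" and A_paths: "depth_paths E A dA {m. E r m}" and
      B_order: "normal_tree_order E B dB ancB" and B_paths: "depth_paths E B dB N"
      using less.hyps A_connected B_connected by meson
    have "normal_tree_order E W (graft_depth r A dA dB) (graft_anc r A ancA ancB)"
      unfolding W by (rule normal_tree_order_graft[OF A_order B_order \<open>r \<notin> A\<close> \<open>r \<notin> B\<close>
        \<open>A \<inter> B = {}\<close> edges[unfolded W]])
    moreover have "depth_paths E W (graft_depth r A dA dB) N"
      unfolding W by (rule depth_paths_graft[OF A_paths B_paths \<open>r \<in> N\<close> \<open>r \<notin> A\<close> \<open>r \<notin> B\<close>
        \<open>A \<inter> B = {}\<close>])
    ultimately show ?thesis by blast
  qed
qed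

theorem theorem3p1:
  fixes V :: "'a set" and E :: "'a \<Rightarrow> 'a \<Rightarrow> bool"
  assumes "simple_graph V E"
  shows "star_chromatic V E \<le> longest_path V E"
proof -
  have "finite V" "\<And>u v. E u v \<Longrightarrow> E v u" "\<And>u. \<not> E u u"
    using assms unfolding simple_graph_def by auto
  moreover have "\<forall>v\<in>V. \<exists>n\<in>V. connected_in E V v n" by (auto simp: connected_in_def)
  ultimately obtain d anc where "normal_tree_order E V d anc" "depth_paths E V d V"
    using normal_tree_order_exists by metis
  moreover have "\<forall>v\<in>V. d v < longest_path V E"
  proof
    fix v assume "v \<in> V"
    then obtain xs where "is_path V E xs" "length xs = Suc (d v)"
      using \<open>depth_paths E V d V\<close> unfolding depth_paths_def by blast
    then show "d v < longest_path V E" using length_le_longest_path[OF assms] by fastforce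
  qed
  ultimately have "star_colouring V E d (longest_path V E)"
    using star_colouring_by_depth[OF assms] by blast
  then show ?thesis unfolding star_chromatic_def by (blast intro: Least_le)
qed

end
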